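(* Let $\Omega\subseteq\mathbb{R}^N$ be an open set with $\mathcal{L}^N(\Omega)<+\infty$, and let $(p_n)$ be a sequence of measurable functions $p_n:\overline{\Omega}\to(1,+\infty)$ such that $p_n^-\to+\infty$ as $n\to\infty$ and there exists $\beta>1$ with $p_n^+\le\beta p_n^-$ for all $n\in\mathbb{N}$. Let $u:\Omega\to\overline{\mathbb{R}}$ be a measurable function. Then the following are equivalent: (i) $u\in L^\infty(\Omega)$; (ii) $\lim_{n\to\infty}\|u\|_{p_n(\cdot)}$ exists and is a real number. Moreover, if (i) or (ii) holds, then $\|u\|_\infty=\lim_{n\to\infty}\|u\|_{p_n(\cdot)}$.
   Context: $p_n^-:=\operatorname{ess\,inf}_{\overline\Omega}p_n$, $p_n^+:=\operatorname{ess\,sup}_{\overline\Omega}p_n$. For a measurable exponent $p$ and measurable $u$, the Luxemburg norm is $\|u\|_{p(\cdot)}:=\inf\{\lambda>0:\int_\Omega|u(x)/\lambda|^{p(x)}dx\le1\}$ (with $\inf\emptyset=+\infty$). *)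

theory Defs
  imports "HOL-Analysis.Analysis"
begin

definition ess_inf_on :: "'a::euclidean_space set \<Rightarrow> ('a \<Rightarrow> real) \<Rightarrow> ereal" where
  "ess_inf_on S f = Sup {z::ereal. AE x in restrict_space lebesgue S. z \<le> ereal (f x)}"

definition ess_sup_on :: "'a::euclidean_space set \<Rightarrow> ('a \<Rightarrow> real) \<Rightarrow> ereal" where
  "ess_sup_on S f = Inf {z::ereal. AE x in restrict_space lebesgue S. ereal (f x) \<le> z}"

definition linf_norm :: "'a::euclidean_space set \<Rightarrow> ('a \<Rightarrow> ereal) \<Rightarrow> ereal" where
  "linf_norm \<Omega> u = Inf {c::ereal. 0 \<le> c \<and> (AE x in restrict_space lebesgue \<Omega>. \<bar>u x\<bar> \<le> c)}"

definition modular_integrand :: "('a \<Rightarrow> real) \<Rightarrow> ('a \<Rightarrow> ereal) \<Rightarrow> real \<Rightarrow> 'a \<Rightarrow> ennreal" where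
  "modular_integrand p u lam x =
     (if \<bar>u x\<bar> = \<infinity> then \<infinity> else ennreal ((\<bar>real_of_ereal (u x)\<bar> / lam) powr p x))"

text \<open>Luxemburg norm, with Inf of the empty set = +infinity.\<close>
definition lux_norm :: "'a::euclidean_space set \<Rightarrow> ('a \<Rightarrow> real) \<Rightarrow> ('a \<Rightarrow> ereal) \<Rightarrow> ereal" where
  "lux_norm \<Omega> p u = Inf {ereal lam | lam. lam > 0 \<and>
       (\<integral>\<^sup>+ x \<in> \<Omega>. modular_integrand p u lam x \<partial>lebesgue) \<le> 1}"

end

theory Submission
  imports Defs
begin

text \<open>If \<open>|u| > t\<close> on a set \<open>A\<close> of positive measure and \<open>p \<ge> K\<close>, then for \<open>\<lambda> \<le> s < t\<close> the
  modular is at least \<open>(t/s)\<^sup>K |A|\<close>, which exceeds \<open>1\<close> once \<open>K\<close> is large; so \<open>\<parallel>u\<parallel>\<^sub>p \<ge> s\<close>.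
  If \<open>|u| \<le> c\<close> a.e. and \<open>\<lambda> > c\<close>, the modular is at most \<open>(c/\<lambda>)\<^sup>K |\<Omega>|\<close>, which is
  below \<open>1\<close> once \<open>K\<close> is large; so \<open>\<parallel>u\<parallel>\<^sub>p \<le> \<lambda>\<close>. Since \<open>p\<^sub>n \<ge> K\<close> a.e. eventually for every \<open>K\<close>,
  the Luxemburg norms have liminf \<open>\<ge> \<parallel>u\<parallel>\<^sub>\<infinity>\<close> and limsup \<open>\<le> \<parallel>u\<parallel>\<^sub>\<infinity>\<close>, i.e. they converge to
  \<open>\<parallel>u\<parallel>\<^sub>\<infinity>\<close> in the extended reals, whether or not \<open>u\<close> is essentially bounded.\<close>

abbreviation modular :: "'a::euclidean_space set \<Rightarrow> ('a \<Rightarrow> real) \<Rightarrow> ('a \<Rightarrow> ereal) \<Rightarrow> real \<Rightarrow> ennreal" where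
  "modular \<Omega> p u lam \<equiv> \<integral>\<^sup>+ x \<in> \<Omega>. modular_integrand p u lam x \<partial>lebesgue"

lemma lux_norm_nonneg: "0 \<le> lux_norm \<Omega> p u"
  unfolding lux_norm_def by (rule Inf_greatest) auto

lemma lux_norm_le: "0 < lam \<Longrightarrow> modular \<Omega> p u lam \<le> 1 \<Longrightarrow> lux_norm \<Omega> p u \<le> ereal lam"
  unfolding lux_norm_def by (rule Inf_lower) blast

lemma lux_norm_ge:
  assumes "\<And>lam. 0 < lam \<Longrightarrow> lam \<le> s \<Longrightarrow> 1 < modular \<Omega> p u lam"
  shows "ereal s \<le> lux_norm \<Omega> p u"
  unfolding lux_norm_def
proof (rule Inf_greatest, clarify)
  fix lam assume "0 < lam" "modular \<Omega> p u lam \<le> 1"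
  then show "ereal s \<le> ereal lam" using assms[of lam] by (cases "lam \<le> s") auto
qed

lemma linf_norm_nonneg: "0 \<le> linf_norm \<Omega> u"
  unfolding linf_norm_def by (rule Inf_greatest) auto

lemma linf_norm_le:
  "0 \<le> c \<Longrightarrow> AE x in restrict_space lebesgue \<Omega>. \<bar>u x\<bar> \<le> ereal c \<Longrightarrow> linf_norm \<Omega> u \<le> ereal c"
  unfolding linf_norm_def by (rule Inf_lower) auto

lemma linf_norm_lessE:
  assumes "linf_norm \<Omega> u < ereal lam"
  obtains c where "0 \<le> c" "c < lam" "AE x in restrict_space lebesgue \<Omega>. \<bar>u x\<bar> \<le> ereal c"
proof -
  obtain c' where c': "0 \<le> c'" "AE x in restrict_space lebesgue \<Omega>. \<bar>u x\<bar> \<le> c'" "c' < ereal lam"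
    using assms unfolding linf_norm_def Inf_less_iff by blast
  then obtain c where "c' = ereal c" by (cases c') auto
  with c' that show ?thesis by auto
qed

lemma AE_ge_if_less_ess_inf_on:
  assumes "S \<in> sets lebesgue" "ereal K < ess_inf_on S f"
  shows "AE x in lebesgue. x \<in> S \<longrightarrow> K \<le> f x"
proof -
  obtain z where z: "AE x in restrict_space lebesgue S. z \<le> ereal (f x)" "ereal K < z"
    using assms(2) unfolding ess_inf_on_def less_Sup_iff by auto
  have "AE x in restrict_space lebesgue S. K \<le> f x"
    using z(1) by (rule eventually_mono) (metis z(2) ereal_less_eq(3) less_imp_le order_less_le_trans)
  then show ?thesis
    using assms(1) by (simp add: AE_restrict_space_iff)
qed

lemma ex_powr_mult_gt_1:
  fixes r m :: real
  assumes "1 < r" "0 < m"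
  shows "\<exists>K\<ge>0. 1 < r powr K * m"
proof -
  define K where "K = max 0 (ln (2/m) / ln r)"
  have "2/m = r powr (ln (2/m) / ln r)"
    using assms by (simp add: powr_def)
  also have "\<dots> \<le> r powr K"
    unfolding K_def using assms by (intro powr_mono) auto
  finally have "2 \<le> r powr K * m" using assms by (simp add: field_simps)
  then show ?thesis by (intro exI[of _ K]) (auto simp: K_def)
qed

lemma ex_powr_mult_le_1:
  fixes r m :: real
  assumes "0 \<le> r" "r < 1" "0 \<le> m"
  shows "\<exists>K\<ge>0. r powr K * m \<le> 1"
proof (cases "r = 0 \<or> m = 0")
  case True then show ?thesis by (intro exI[of _ 0]) auto
next
  case False
  then have pos: "0 < r" "0 < m" using assms by auto
  define K where "K = max 0 (ln m / - ln r)"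
  have "r powr K \<le> r powr (ln m / - ln r)"
    unfolding K_def using assms by (intro powr_mono') auto
  also have "\<dots> = 1/m"
    using pos assms by (simp add: powr_def exp_minus field_simps)
  finally have "r powr K * m \<le> 1" using pos by (simp add: field_simps)
  then show ?thesis by (intro exI[of _ K]) (auto simp: K_def)
qed

lemma modular_integrand_ge:
  assumes "ereal t < \<bar>u x\<bar>" "0 < lam" "lam \<le> s" "s \<le> t" "0 \<le> K" "K \<le> p x"
  shows "ennreal ((t/s) powr K) \<le> modular_integrand p u lam x"
proof (cases "\<bar>u x\<bar> = \<infinity>")
  case False
  then have "t < \<bar>real_of_ereal (u x)\<bar>"
    using assms(1) by (cases "u x") auto
  then have "t/s \<le> \<bar>real_of_ereal (u x)\<bar> / lam"
    using assms by (intro frac_le) auto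
  moreover have "1 \<le> t/s" using assms by simp
  ultimately have "(t/s) powr K \<le> (\<bar>real_of_ereal (u x)\<bar> / lam) powr p x"
    using assms by (meson order_trans powr_mono powr_mono2 zero_le_one)
  then show ?thesis using False by (simp add: modular_integrand_def ennreal_leI)
qed (simp add: modular_integrand_def)

lemma modular_integrand_le:
  assumes "\<bar>u x\<bar> \<le> ereal c" "0 \<le> c" "c \<le> lam" "0 < lam" "0 \<le> K" "K \<le> p x"
  shows "modular_integrand p u lam x \<le> ennreal ((c/lam) powr K)"
proof -
  have finite: "\<bar>u x\<bar> \<noteq> \<infinity>" using assms(1) by auto
  then have "\<bar>real_of_ereal (u x)\<bar> \<le> c"
    using assms(1) by (cases "u x") auto
  then have "(\<bar>real_of_ereal (u x)\<bar> / lam) powr p x \<le> (c/lam) powr p x"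
    using assms by (intro powr_mono2 divide_right_mono divide_nonneg_pos) (auto intro: real_of_ereal_pos)
  also have "\<dots> \<le> (c/lam) powr K"
    using assms by (intro powr_mono') auto
  finally show ?thesis using finite by (simp add: modular_integrand_def ennreal_leI)
qed

lemma modular_ge_measure:
  assumes "A \<in> sets lebesgue" "A \<subseteq> \<Omega>" "\<And>x. x \<in> A \<Longrightarrow> ereal t < \<bar>u x\<bar>"
    and "AE x in lebesgue. x \<in> \<Omega> \<longrightarrow> K \<le> p x" "0 \<le> K"
    and "0 < lam" "lam \<le> s" "s \<le> t"
  shows "ennreal ((t/s) powr K) * emeasure lebesgue A \<le> modular \<Omega> p u lam"
proof -
  have "ennreal ((t/s) powr K) * emeasure lebesgue A
      = \<integral>\<^sup>+ x. ennreal ((t/s) powr K) * indicator A x \<partial>lebesgue"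
    using assms(1) by (simp add: nn_integral_cmult_indicator)
  also have "\<dots> \<le> modular \<Omega> p u lam"
    using assms(4) by (intro nn_integral_mono_AE, eventually_elim)
      (use assms in \<open>auto simp: indicator_def intro!: modular_integrand_ge\<close>)
  finally show ?thesis .
qed

lemma modular_le_measure:
  assumes "\<Omega> \<in> sets lebesgue" "AE x in lebesgue. x \<in> \<Omega> \<longrightarrow> \<bar>u x\<bar> \<le> ereal c"
    and "AE x in lebesgue. x \<in> \<Omega> \<longrightarrow> K \<le> p x" "0 \<le> K"
    and "0 \<le> c" "c \<le> lam" "0 < lam"
  shows "modular \<Omega> p u lam \<le> ennreal ((c/lam) powr K) * emeasure lebesgue \<Omega>"
proof -
  have "modular \<Omega> p u lam \<le> \<integral>\<^sup>+ x. ennreal ((c/lam) powr K) * indicator \<Omega> x \<partial>lebesgue"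
    using assms(2,3) by (intro nn_integral_mono_AE, eventually_elim)
      (use assms in \<open>auto simp: indicator_def intro!: modular_integrand_le\<close>)
  also have "\<dots> = ennreal ((c/lam) powr K) * emeasure lebesgue \<Omega>"
    using assms(1) by (simp add: nn_integral_cmult_indicator)
  finally show ?thesis .
qed

lemma eventually_lux_norm_ge:
  fixes \<Omega> :: "'a::euclidean_space set"
  assumes \<Omega>: "\<Omega> \<in> sets lebesgue" and u: "u \<in> borel_measurable (restrict_space lebesgue \<Omega>)"
    and p: "\<And>K. \<forall>\<^sub>F n in sequentially. AE x in lebesgue. x \<in> \<Omega> \<longrightarrow> K \<le> p n x"
    and not_bounded: "\<not> (AE x in restrict_space lebesgue \<Omega>. \<bar>u x\<bar> \<le> ereal t)"
    and "0 < s" "s < t"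
  shows "\<forall>\<^sub>F n in sequentially. ereal s \<le> lux_norm \<Omega> (p n) u"
proof -
  define A where "A = {x \<in> space (restrict_space lebesgue \<Omega>). ereal t < \<bar>u x\<bar>}"
  have A: "A \<in> sets (restrict_space lebesgue \<Omega>)"
    unfolding A_def using u by measurable
  have "A \<subseteq> \<Omega>" unfolding A_def by (auto simp: space_restrict_space)
  moreover have A_sets: "A \<in> sets lebesgue"
    using A \<Omega> by (simp add: sets_restrict_space_iff)
  moreover have "emeasure (restrict_space lebesgue \<Omega>) A \<noteq> 0"
    using not_bounded AE_iff_measurable[OF A, of "\<lambda>x. \<bar>u x\<bar> \<le> ereal t"]
    by (auto simp: A_def not_le)
  ultimately have "0 < emeasure lebesgue A"
    using \<Omega> by (simp add: emeasure_restrict_space zero_less_iff_neq_zero)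
  then obtain m where m: "0 < m" "ennreal m \<le> emeasure lebesgue A"
    by (metis dense enn2real_le enn2real_positive_iff ennreal_0 ennreal_enn2real
        linorder_not_less order_less_imp_le)
  obtain K where K: "0 \<le> K" "1 < (t/s) powr K * m"
    using ex_powr_mult_gt_1[OF _ m(1), of "t/s"] assms by auto
  show ?thesis
    using p[of K]
  proof eventually_elim
    case (elim n)
    show ?case
    proof (rule lux_norm_ge)
      fix lam :: real assume "0 < lam" "lam \<le> s"
      have "1 < ennreal ((t/s) powr K) * ennreal m"
        using K m by (simp add: ennreal_mult[symmetric] ennreal_less_iff)
      also have "\<dots> \<le> ennreal ((t/s) powr K) * emeasure lebesgue A"
        using m by (intro mult_left_mono) auto
      also have "\<dots> \<le> modular \<Omega> (p n) u lam"
        using \<open>A \<subseteq> \<Omega>\<close> A_sets elim K \<open>0 < lam\<close> \<open>lam \<le> s\<close> \<open>s < t\<close>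
        by (intro modular_ge_measure) (auto simp: A_def space_restrict_space)
      finally show "1 < modular \<Omega> (p n) u lam" .
    qed
  qed
qed

lemma eventually_lux_norm_le:
  fixes \<Omega> :: "'a::euclidean_space set"
  assumes \<Omega>: "\<Omega> \<in> sets lebesgue" "emeasure lebesgue \<Omega> < \<infinity>"
    and p: "\<And>K. \<forall>\<^sub>F n in sequentially. AE x in lebesgue. x \<in> \<Omega> \<longrightarrow> K \<le> p n x"
    and bounded: "AE x in restrict_space lebesgue \<Omega>. \<bar>u x\<bar> \<le> ereal c"
    and c: "0 \<le> c" "c < lam"
  shows "\<forall>\<^sub>F n in sequentially. lux_norm \<Omega> (p n) u \<le> ereal lam"
proof -
  have bounded': "AE x in lebesgue. x \<in> \<Omega> \<longrightarrow> \<bar>u x\<bar> \<le> ereal c"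
    using bounded \<Omega> by (simp add: AE_restrict_space_iff)
  obtain K where K: "0 \<le> K" "(c/lam) powr K * measure lebesgue \<Omega> \<le> 1"
    using ex_powr_mult_le_1[of "c/lam" "measure lebesgue \<Omega>"] c by auto
  show ?thesis
    using p[of K]
  proof eventually_elim
    case (elim n)
    have "modular \<Omega> (p n) u lam \<le> ennreal ((c/lam) powr K) * emeasure lebesgue \<Omega>"
      using \<Omega>(1) bounded' elim K(1) c by (intro modular_le_measure) auto
    also have "\<dots> = ennreal ((c/lam) powr K * measure lebesgue \<Omega>)"
      using \<Omega>(2) by (simp add: emeasure_eq_ennreal_measure ennreal_mult)
    also have "\<dots> \<le> 1"
      using K(2) by (simp add: ennreal_le_1)
    finally show ?case
      using c by (intro lux_norm_le) auto
  qed
qed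

lemma linf_norm_le_Liminf_lux_norm:
  fixes \<Omega> :: "'a::euclidean_space set"
  assumes "\<Omega> \<in> sets lebesgue" "u \<in> borel_measurable (restrict_space lebesgue \<Omega>)"
    and "\<And>K. \<forall>\<^sub>F n in sequentially. AE x in lebesgue. x \<in> \<Omega> \<longrightarrow> K \<le> p n x"
  shows "linf_norm \<Omega> u \<le> liminf (\<lambda>n. lux_norm \<Omega> (p n) u)"
proof (unfold le_Liminf_iff, intro allI impI)
  fix y assume y: "y < linf_norm \<Omega> u"
  show "\<forall>\<^sub>F n in sequentially. y < lux_norm \<Omega> (p n) u"
  proof (cases "y < 0")
    case True then show ?thesis
      by (intro always_eventually allI order_less_le_trans[OF True lux_norm_nonneg])
  next
    case False
    obtain t where t: "y < ereal t" "ereal t < linf_norm \<Omega> u"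
      using ereal_dense2[OF y] by blast
    obtain s where s: "y < ereal s" "s < t"
      using ereal_dense2[OF t(1)] by auto
    have "0 < s" using False s(1) by (cases y) auto
    moreover have "\<not> (AE x in restrict_space lebesgue \<Omega>. \<bar>u x\<bar> \<le> ereal t)"
      using t(2) \<open>0 < s\<close> s(2) linf_norm_le[where c=t and \<Omega>=\<Omega> and u=u] by force
    ultimately have "\<forall>\<^sub>F n in sequentially. ereal s \<le> lux_norm \<Omega> (p n) u"
      using assms s(2) by (intro eventually_lux_norm_ge) auto
    then show ?thesis by eventually_elim (use s(1) in auto)
  qed
qed

lemma Limsup_lux_norm_le_linf_norm:
  fixes \<Omega> :: "'a::euclidean_space set"
  assumes "\<Omega> \<in> sets lebesgue" "emeasure lebesgue \<Omega> < \<infinity>"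
    and "\<And>K. \<forall>\<^sub>F n in sequentially. AE x in lebesgue. x \<in> \<Omega> \<longrightarrow> K \<le> p n x"
  shows "limsup (\<lambda>n. lux_norm \<Omega> (p n) u) \<le> linf_norm \<Omega> u"
proof (unfold Limsup_le_iff, intro allI impI)
  fix y assume "linf_norm \<Omega> u < y"
  then obtain lam where lam: "linf_norm \<Omega> u < ereal lam" "ereal lam < y"
    using ereal_dense2 by blast
  obtain c where "0 \<le> c" "c < lam" "AE x in restrict_space lebesgue \<Omega>. \<bar>u x\<bar> \<le> ereal c"
    using lam(1) by (rule linf_norm_lessE)
  then have "\<forall>\<^sub>F n in sequentially. lux_norm \<Omega> (p n) u \<le> ereal lam"
    using assms by (intro eventually_lux_norm_le) auto
  then show "\<forall>\<^sub>F n in sequentially. lux_norm \<Omega> (p n) u < y"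
    by eventually_elim (use lam in auto)
qed

lemma lux_norm_tendsto_linf_norm:
  fixes \<Omega> :: "'a::euclidean_space set"
  assumes "\<Omega> \<in> sets lebesgue" "emeasure lebesgue \<Omega> < \<infinity>"
    and "u \<in> borel_measurable (restrict_space lebesgue \<Omega>)"
    and "\<And>K. \<forall>\<^sub>F n in sequentially. AE x in lebesgue. x \<in> \<Omega> \<longrightarrow> K \<le> p n x"
  shows "(\<lambda>n. lux_norm \<Omega> (p n) u) \<longlonglongrightarrow> linf_norm \<Omega> u"
proof -
  have "liminf (\<lambda>n. lux_norm \<Omega> (p n) u) = linf_norm \<Omega> u"
    "limsup (\<lambda>n. lux_norm \<Omega> (p n) u) = linf_norm \<Omega> u"
    using linf_norm_le_Liminf_lux_norm[of \<Omega> u p] Limsup_lux_norm_le_linf_norm[of \<Omega> p u]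
      Liminf_le_Limsup[of sequentially "\<lambda>n. lux_norm \<Omega> (p n) u"] assms
    by auto
  then show ?thesis by (intro Liminf_eq_Limsup) auto
qed

theorem proposition3p3:
  fixes \<Omega> :: "'a::euclidean_space set"
    and p :: "nat \<Rightarrow> 'a \<Rightarrow> real"
    and u :: "'a \<Rightarrow> ereal"
    and \<beta> :: real
  assumes "open \<Omega>"
    and "emeasure lebesgue \<Omega> < \<infinity>"
    and "\<And>n. p n \<in> borel_measurable (restrict_space lebesgue (closure \<Omega>))"
    and "\<And>n x. x \<in> closure \<Omega> \<Longrightarrow> p n x > 1"
    and "(\<lambda>n. ess_inf_on (closure \<Omega>) (p n)) \<longlonglongrightarrow> \<infinity>"
    and "\<beta> > 1"
    and "\<And>n. ess_sup_on (closure \<Omega>) (p n) \<le> ereal \<beta> * ess_inf_on (closure \<Omega>) (p n)"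
    and "u \<in> borel_measurable (restrict_space lebesgue \<Omega>)"
  shows "(linf_norm \<Omega> u < \<infinity> \<longleftrightarrow> (\<exists>L::real. (\<lambda>n. lux_norm \<Omega> (p n) u) \<longlonglongrightarrow> ereal L))
         \<and> (linf_norm \<Omega> u < \<infinity> \<longrightarrow> (\<lambda>n. lux_norm \<Omega> (p n) u) \<longlonglongrightarrow> linf_norm \<Omega> u)"
proof -
  have \<Omega>: "\<Omega> \<in> sets lebesgue"
    using assms(1) by (metis borel_open sets_completionI_sets sets_lborel)
  have "\<forall>\<^sub>F n in sequentially. AE x in lebesgue. x \<in> \<Omega> \<longrightarrow> K \<le> p n x" for K
  proof -
    have "\<forall>\<^sub>F n in sequentially. ereal K < ess_inf_on (closure \<Omega>) (p n)"
      using assms(5) by (rule order_tendstoD) simp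
    then show ?thesis
    proof eventually_elim
      case (elim n)
      then have "AE x in lebesgue. x \<in> closure \<Omega> \<longrightarrow> K \<le> p n x"
        by (intro AE_ge_if_less_ess_inf_on) (auto intro: borel_closed sets_completionI_sets)
      then show ?case
        by eventually_elim (use closure_subset in auto)
    qed
  qed
  then have lim: "(\<lambda>n. lux_norm \<Omega> (p n) u) \<longlonglongrightarrow> linf_norm \<Omega> u"
    using \<Omega> assms(2,8) by (intro lux_norm_tendsto_linf_norm)
  show ?thesis
  proof (cases "linf_norm \<Omega> u")
    case (real L)
    then show ?thesis using lim by auto
  next
    case PInf
    then show ?thesis using lim LIMSEQ_unique by fastforce
  qed (use linf_norm_nonneg[of \<Omega> u] in auto)
qed

end
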